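(* Let $n\ge 1$, $i\in\{1,\ldots,n-1\}$, and let $C$ be an $s_i$-stable set of transpositions in $S_n$ (i.e. $s_i\in C$ and $s_iCs_i=C$). Let $H_C^{*s_i}=\{f\in H_C\mid f*s_i=f\}$. Then $H_C^{*s_i}$ and $(x_i-x_{i+1})H_C^{*s_i}$ are $\mathbb{C}[t_1,\ldots,t_n]$-submodules of $H$ stable under the dot action, and $$H_C=H_C^{*s_i}\oplus (x_i-x_{i+1})H_C^{*s_i}$$ is an internal direct sum decomposition of $\mathbb{C}[t_1,\ldots,t_n]$-submodules of $H$ equipped with the dot action.
   Context: Let $S_n$ be the symmetric group on $\{1,\ldots,n\}$ with $(vw)(j)=v(w(j))$, and $s_i=(i\leftrightarrow i+1)$. Let $H=\mathrm{Fun}(S_n,\mathbb{C}[t_1,\ldots,t_n])$ with pointwise operations; it is a $\mathbb{C}[t_1,\ldots,t_n]$-module via constant functions. The star action (right) is $(f*w)(v;t_1,\ldots,t_n)=f(vw^{-1};t_1,\ldots,t_n)$, and the dot action (left) is $(w\cdot f)(v;t_1,\ldots,t_n)=f(w^{-1}v;t_{w(1)},\ldots,t_{w(n)})$. Let $x_i\in H$ be the function $v\mapsto t_{v(i)}$. For a transposition $\tau=(i\leftrightarrow k)$, $f\in H$ satisfies condition $\tau$ if $f-f*\tau=(x_i-x_k)g$ for some $g\in H$; these form a subring $H_\tau$, and for a set $C$ of transpositions $H_C=\bigcap_{\tau\in C}H_\tau$ (with $H_\varnothing=H$). *)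

theory Defs
  imports Complex_Main "HOL-Library.Poly_Mapping" "HOL-Combinatorics.Permutations"
    "HOL-Combinatorics.Transposition" "HOL-Library.Function_Algebras"
begin

text \<open>Multivariate polynomials over the complex numbers: a monomial is a finitely
  supported exponent vector nat \<Rightarrow>0 nat (variable t_j has index j), a polynomial a
  finitely supported coefficient function on monomials.\<close>

type_synonym mpoly = "(nat \<Rightarrow>\<^sub>0 nat) \<Rightarrow>\<^sub>0 complex"

definition polys :: "nat \<Rightarrow> mpoly set" where
  "polys n = {p. \<forall>m \<in> Poly_Mapping.keys p. Poly_Mapping.keys m \<subseteq> {1..n}}"

definition Var :: "nat \<Rightarrow> mpoly" where
  "Var j = Poly_Mapping.single (Poly_Mapping.single j 1) 1"

text \<open>Variable substitution t_j \<mapsto> t_(w j) (for a permutation w).\<close>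
definition rename :: "(nat \<Rightarrow> nat) \<Rightarrow> mpoly \<Rightarrow> mpoly" where
  "rename w p = Abs_poly_mapping (\<lambda>m'. Poly_Mapping.lookup p (Abs_poly_mapping (Poly_Mapping.lookup m' \<circ> w)))"

definition Sn :: "nat \<Rightarrow> (nat \<Rightarrow> nat) set" where
  "Sn n = {w. w permutes {1..n}}"

text \<open>H = Fun(S_n, C[t_1..t_n]); functions are represented as total functions
  vanishing outside S_n.  Ring operations are the pointwise ones on such functions.\<close>
definition HH :: "nat \<Rightarrow> ((nat \<Rightarrow> nat) \<Rightarrow> mpoly) set" where
  "HH n = {f. (\<forall>v \<in> Sn n. f v \<in> polys n) \<and> (\<forall>v. v \<notin> Sn n \<longrightarrow> f v = 0)}"

text \<open>constant function with value p (the C[t]-module structure)\<close>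
definition const :: "nat \<Rightarrow> mpoly \<Rightarrow> (nat \<Rightarrow> nat) \<Rightarrow> mpoly" where
  "const n p = (\<lambda>v. if v \<in> Sn n then p else 0)"

definition xx :: "nat \<Rightarrow> nat \<Rightarrow> (nat \<Rightarrow> nat) \<Rightarrow> mpoly" where
  "xx n i = (\<lambda>v. if v \<in> Sn n then Var (v i) else 0)"

definition star :: "nat \<Rightarrow> ((nat \<Rightarrow> nat) \<Rightarrow> mpoly) \<Rightarrow> (nat \<Rightarrow> nat) \<Rightarrow> (nat \<Rightarrow> nat) \<Rightarrow> mpoly" where
  "star n f w = (\<lambda>v. if v \<in> Sn n then f (v \<circ> inv w) else 0)"

definition dot :: "nat \<Rightarrow> (nat \<Rightarrow> nat) \<Rightarrow> ((nat \<Rightarrow> nat) \<Rightarrow> mpoly) \<Rightarrow> (nat \<Rightarrow> nat) \<Rightarrow> mpoly" where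
  "dot n w f = (\<lambda>v. if v \<in> Sn n then rename w (f (inv w \<circ> v)) else 0)"

definition is_transposition :: "nat \<Rightarrow> (nat \<Rightarrow> nat) \<Rightarrow> bool" where
  "is_transposition n \<tau> \<longleftrightarrow> (\<exists>i k. i \<in> {1..n} \<and> k \<in> {1..n} \<and> i < k \<and> \<tau> = transpose i k)"

definition H_tau :: "nat \<Rightarrow> nat \<Rightarrow> nat \<Rightarrow> ((nat \<Rightarrow> nat) \<Rightarrow> mpoly) set" where
  "H_tau n i k = {f \<in> HH n. \<exists>g \<in> HH n. f - star n f (transpose i k) = (xx n i - xx n k) * g}"

definition H_C :: "nat \<Rightarrow> (nat \<Rightarrow> nat) set \<Rightarrow> ((nat \<Rightarrow> nat) \<Rightarrow> mpoly) set" where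
  "H_C n C = HH n \<inter> (\<Inter>\<tau>\<in>C. \<Inter>{H_tau n i k | i k. i \<in> {1..n} \<and> k \<in> {1..n} \<and> i < k \<and> \<tau> = transpose i k})"

definition is_submodule :: "nat \<Rightarrow> ((nat \<Rightarrow> nat) \<Rightarrow> mpoly) set \<Rightarrow> bool" where
  "is_submodule n M \<longleftrightarrow> M \<subseteq> HH n \<and> 0 \<in> M \<and> (\<forall>f\<in>M. \<forall>g\<in>M. f + g \<in> M)
     \<and> (\<forall>p \<in> polys n. \<forall>f\<in>M. const n p * f \<in> M)"

definition dot_stable :: "nat \<Rightarrow> ((nat \<Rightarrow> nat) \<Rightarrow> mpoly) set \<Rightarrow> bool" where
  "dot_stable n M \<longleftrightarrow> (\<forall>w \<in> Sn n. \<forall>f \<in> M. dot n w f \<in> M)"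

end

theory Submission
  imports Defs
begin

text \<open>Write s = s_i and D = x_i - x_(i+1), so that D * s = -D and D takes only nonzero values.
  For f in H_C, condition s gives f - f * s = D g; applying * s shows g * s = g, hence
  f = (f + f * s)/2 + D (g/2).  The point is that g again lies in H_C: for another transposition
  (a b) in C, the function D g = f - f * s lies in H_C because C is s-stable, and at each v the
  linear form t_(v a) - t_(v b) is a prime not dividing t_(v i) - t_(v (i+1)), so it can be
  cancelled from condition (a b) for D g.  The sum is direct because an s-invariant element of
  D H_C^(*s) is also anti-invariant.\<close>

section \<open>Polynomial algebra\<close>

lemma poly_mapping_single_induct [case_names zero single add]:
  assumes "P 0" and "\<And>a b. P (Poly_Mapping.single a b)"
    and "\<And>f g. P f \<Longrightarrow> P g \<Longrightarrow> P (f + g)"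
  shows "P x"
proof (induction x rule: update_induct)
  case const
  show ?case by (rule assms(1))
next
  case (update f a b)
  have "Poly_Mapping.update a b f = f + Poly_Mapping.single a b"
    using update(1)
    by (intro poly_mapping_eqI) (auto simp: lookup_update lookup_add lookup_single when_def in_keys_iff)
  then show ?case using update(3) assms(2,3) by simp
qed

definition map_monomials ::
  "((nat \<Rightarrow>\<^sub>0 nat) \<Rightarrow> (nat \<Rightarrow>\<^sub>0 nat)) \<Rightarrow> ((nat \<Rightarrow>\<^sub>0 nat) \<Rightarrow> complex) \<Rightarrow> mpoly \<Rightarrow> mpoly" where
  "map_monomials \<phi> c P =
     (\<Sum>m\<in>Poly_Mapping.keys P. Poly_Mapping.single (\<phi> m) (c m * Poly_Mapping.lookup P m))"

lemma map_monomials_eq_sum_superset: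
  assumes "finite S" and "Poly_Mapping.keys P \<subseteq> S"
  shows "map_monomials \<phi> c P = (\<Sum>m\<in>S. Poly_Mapping.single (\<phi> m) (c m * Poly_Mapping.lookup P m))"
  unfolding map_monomials_def
  by (rule sum.mono_neutral_left) (use assms in \<open>auto simp: in_keys_iff\<close>)

lemma map_monomials_add: "map_monomials \<phi> c (P + Q) = map_monomials \<phi> c P + map_monomials \<phi> c Q"
proof -
  let ?S = "Poly_Mapping.keys P \<union> Poly_Mapping.keys Q"
  have S: "finite ?S" by simp
  have "map_monomials \<phi> c (P + Q) =
      (\<Sum>m\<in>?S. Poly_Mapping.single (\<phi> m) (c m * Poly_Mapping.lookup (P + Q) m))"
    using keys_add[of P Q] by (intro map_monomials_eq_sum_superset) auto
  also have "\<dots> = map_monomials \<phi> c P + map_monomials \<phi> c Q"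
    by (subst (1 2) map_monomials_eq_sum_superset[OF S])
       (auto simp: lookup_add distrib_left single_add sum.distrib)
  finally show ?thesis .
qed

lemma map_monomials_single:
  "map_monomials \<phi> c (Poly_Mapping.single a b) = Poly_Mapping.single (\<phi> a) (c a * b)"
  by (cases "b = 0") (auto simp: map_monomials_def)

lemma map_monomials_diff: "map_monomials \<phi> c (P - Q) = map_monomials \<phi> c P - map_monomials \<phi> c Q"
  using map_monomials_add[of \<phi> c "P - Q" Q] by (simp add: algebra_simps)

lemma map_monomials_mult:
  assumes "\<And>x y. \<phi> (x + y) = \<phi> x + \<phi> y" and "\<And>x y. c (x + y) = c x * c y"
  shows "map_monomials \<phi> c (P * Q) = map_monomials \<phi> c P * map_monomials \<phi> c Q"
proof (induction P rule: poly_mapping_single_induct)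
  case zero
  show ?case by (simp add: map_monomials_def)
next
  case (single a b)
  show ?case
  proof (induction Q rule: poly_mapping_single_induct)
    case zero
    show ?case by (simp add: map_monomials_def)
  next
    case (single a' b')
    show ?case by (simp add: mult_single map_monomials_single assms mult_ac)
  next
    case (add f g)
    then show ?case by (simp add: distrib_left map_monomials_add)
  qed
next
  case (add f g)
  then show ?case by (simp add: distrib_right map_monomials_add)
qed

lemma lookup_map_monomials:
  "Poly_Mapping.lookup (map_monomials \<phi> c P) m' =
     (\<Sum>m\<in>Poly_Mapping.keys P. if \<phi> m = m' then c m * Poly_Mapping.lookup P m else 0)"
  by (simp add: map_monomials_def lookup_sum lookup_single when_def)

lemma keys_map_monomials:
  "Poly_Mapping.keys (map_monomials \<phi> c P) \<subseteq> \<phi> ` {m \<in> Poly_Mapping.keys P. c m \<noteq> 0}"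
proof -
  have "Poly_Mapping.keys (map_monomials \<phi> c P) \<subseteq>
      (\<Union>m\<in>Poly_Mapping.keys P.
         Poly_Mapping.keys (Poly_Mapping.single (\<phi> m) (c m * Poly_Mapping.lookup P m)))"
    unfolding map_monomials_def by (rule keys_sum)
  also have "\<dots> \<subseteq> \<phi> ` {m \<in> Poly_Mapping.keys P. c m \<noteq> 0}"
    by (auto split: if_splits)
  finally show ?thesis .
qed

lemma keys_add_monomial:
  "Poly_Mapping.keys (m1 + m2 :: nat \<Rightarrow>\<^sub>0 nat) = Poly_Mapping.keys m1 \<union> Poly_Mapping.keys m2"
  by (auto simp: in_keys_iff lookup_add)

lemma Var_power: "Var j ^ e = Poly_Mapping.single (Poly_Mapping.single j e) 1"
  by (induction e) (simp_all add: Var_def mult_single single_add[symmetric])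

lemma Var_eq_iff: "Var a = Var b \<longleftrightarrow> a = b"
proof
  assume "Var a = Var b"
  then have "Poly_Mapping.keys ` Poly_Mapping.keys (Var a) = Poly_Mapping.keys ` Poly_Mapping.keys (Var b)"
    by simp
  then show "a = b" by (simp add: Var_def)
qed simp

definition merge_exponent :: "nat \<Rightarrow> nat \<Rightarrow> (nat \<Rightarrow>\<^sub>0 nat) \<Rightarrow> (nat \<Rightarrow>\<^sub>0 nat)" where
  "merge_exponent q p m = Poly_Mapping.update q 0 m + Poly_Mapping.single p (Poly_Mapping.lookup m q)"

definition subst_var :: "nat \<Rightarrow> nat \<Rightarrow> mpoly \<Rightarrow> mpoly" where
  "subst_var q p = map_monomials (merge_exponent q p) (\<lambda>_. 1)"

lemma subst_var_mult: "subst_var q p (P * Q) = subst_var q p P * subst_var q p Q"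
  unfolding subst_var_def
  by (rule map_monomials_mult)
     (simp_all add: merge_exponent_def poly_mapping_eq_iff lookup_add lookup_update lookup_single
       fun_eq_iff when_def)

lemma subst_var_diff: "subst_var q p (P - Q) = subst_var q p P - subst_var q p Q"
  unfolding subst_var_def by (rule map_monomials_diff)

lemma subst_var_Var: "subst_var q p (Var j) = Var (if j = q then p else j)"
proof -
  have "merge_exponent q p (Poly_Mapping.single j 1) = Poly_Mapping.single (if j = q then p else j) 1"
    by (rule poly_mapping_eqI)
       (simp add: merge_exponent_def lookup_add lookup_update lookup_single when_def)
  then show ?thesis by (simp add: subst_var_def Var_def map_monomials_single)
qed

lemma Var_diff_dvd_diff_subst_var: "(Var q - Var p) dvd (B - subst_var q p B)"
proof (induction B rule: poly_mapping_single_induct)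
  case zero
  show ?case by (simp add: subst_var_def map_monomials_def)
next
  case (single m c)
  define e where "e = Poly_Mapping.lookup m q"
  define m0 where "m0 = Poly_Mapping.update q 0 m"
  have m: "m = m0 + Poly_Mapping.single q e"
    by (rule poly_mapping_eqI) (simp add: m0_def e_def lookup_add lookup_update lookup_single when_def)
  have merged: "merge_exponent q p m = m0 + Poly_Mapping.single p e"
    by (simp add: merge_exponent_def m0_def e_def)
  have "Poly_Mapping.single m c - subst_var q p (Poly_Mapping.single m c) =
      Poly_Mapping.single m0 c * Var q ^ e - Poly_Mapping.single m0 c * Var p ^ e"
    by (subst (1) m) (simp add: subst_var_def map_monomials_single merged Var_power mult_single)
  then have "Poly_Mapping.single m c - subst_var q p (Poly_Mapping.single m c) =
      Poly_Mapping.single m0 c * (Var q ^ e - Var p ^ e)"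
    by (simp add: right_diff_distrib)
  moreover have "(Var q - Var p) dvd (Var q ^ e - Var p ^ e)"
    by (rule dvdI[OF power_diff_sumr2])
  ultimately show ?case by (simp add: dvd_mult)
next
  case (add f g)
  have "f + g - subst_var q p (f + g) = (f - subst_var q p f) + (g - subst_var q p g)"
    by (simp add: subst_var_def map_monomials_add)
  then show ?case using add by (metis dvd_add)
qed

text \<open>t_p - t_q is prime: the substitution t_q := t_p has kernel generated by t_q - t_p and
  does not kill t_c - t_d.\<close>
lemma Var_diff_dvd_mult_cancel:
  assumes "p \<noteq> q" and "c \<noteq> d" and "{c, d} \<noteq> {p, q}"
    and "(Var p - Var q) dvd ((Var c - Var d) * B)"
  shows "(Var p - Var q) dvd B"
proof -
  obtain k where k: "(Var c - Var d) * B = (Var p - Var q) * k"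
    using assms(4) by (auto simp: dvd_def)
  have "(Var (if c = q then p else c) - Var (if d = q then p else d)) * subst_var q p B =
      subst_var q p ((Var c - Var d) * B)"
    by (simp add: subst_var_mult subst_var_diff subst_var_Var)
  also have "\<dots> = 0"
    by (simp add: k subst_var_mult subst_var_diff subst_var_Var)
  finally have "subst_var q p B = 0"
    using assms(1-3) by (auto simp: Var_eq_iff split: if_splits)
  then have "(Var q - Var p) dvd B" using Var_diff_dvd_diff_subst_var[of q p B] by simp
  moreover have "Var p - Var q = - (Var q - Var p)" by simp
  ultimately show ?thesis by (simp only: minus_dvd_iff)
qed

lemma polys_zero [simp]: "0 \<in> polys n"
  by (simp add: polys_def)

lemma polys_single_zero: "Poly_Mapping.single 0 c \<in> polys n"
  by (simp add: polys_def)

lemma polys_Var: "j \<in> {1..n} \<Longrightarrow> Var j \<in> polys n"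
  by (simp add: polys_def Var_def)

lemma polys_add: "P \<in> polys n \<Longrightarrow> Q \<in> polys n \<Longrightarrow> P + Q \<in> polys n"
  using keys_add[of P Q] unfolding polys_def by blast

lemma polys_diff: "P \<in> polys n \<Longrightarrow> Q \<in> polys n \<Longrightarrow> P - Q \<in> polys n"
  using polys_add[of P n "- Q"] unfolding polys_def by simp

lemma polys_mult: "P \<in> polys n \<Longrightarrow> Q \<in> polys n \<Longrightarrow> P * Q \<in> polys n"
  using keys_mult[of P Q] unfolding polys_def by (force simp: keys_add_monomial)

text \<open>Dropping the monomials that involve variables outside t_1, ..., t_n is a ring
  homomorphism fixing polys n, so cofactors of divisions in polys n can be taken in polys n.\<close>
definition restrict_vars :: "nat \<Rightarrow> mpoly \<Rightarrow> mpoly" where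
  "restrict_vars n = map_monomials id (\<lambda>m. if Poly_Mapping.keys m \<subseteq> {1..n} then 1 else 0)"

lemma restrict_vars_mult: "restrict_vars n (P * Q) = restrict_vars n P * restrict_vars n Q"
  unfolding restrict_vars_def by (rule map_monomials_mult) (auto simp: keys_add_monomial)

lemma restrict_vars_polys: "P \<in> polys n \<Longrightarrow> restrict_vars n P = P"
  by (rule poly_mapping_eqI)
     (auto simp: restrict_vars_def lookup_map_monomials polys_def in_keys_iff
       if_distrib[of "\<lambda>x. x * _"] cong: if_cong)

lemma restrict_vars_in_polys: "restrict_vars n P \<in> polys n"
  using keys_map_monomials[of id "\<lambda>m. if Poly_Mapping.keys m \<subseteq> {1..n} then 1 else 0" P]
  unfolding polys_def restrict_vars_def by (auto split: if_splits)

lemma polys_dvd_cofactor: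
  assumes "A \<in> polys n" and "B \<in> polys n" and "A dvd B"
  shows "\<exists>k\<in>polys n. B = A * k"
proof -
  obtain k where "B = A * k" using assms(3) by (auto simp: dvd_def)
  then have "B = A * restrict_vars n k"
    using assms(1,2) restrict_vars_mult[of n A k] by (simp add: restrict_vars_polys)
  then show ?thesis using restrict_vars_in_polys by blast
qed

definition comp_monomial :: "(nat \<Rightarrow> nat) \<Rightarrow> (nat \<Rightarrow>\<^sub>0 nat) \<Rightarrow> (nat \<Rightarrow>\<^sub>0 nat)" where
  "comp_monomial w m = Abs_poly_mapping (Poly_Mapping.lookup m \<circ> w)"

lemma lookup_comp_monomial:
  assumes "bij w"
  shows "Poly_Mapping.lookup (comp_monomial w m) = Poly_Mapping.lookup m \<circ> w"
proof -
  have "{k. (Poly_Mapping.lookup m \<circ> w) k \<noteq> 0} = w -` Poly_Mapping.keys m"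
    by (auto simp: in_keys_iff)
  moreover have "finite (w -` Poly_Mapping.keys m)"
    using assms by (intro finite_vimageI) (auto simp: bij_def)
  ultimately show ?thesis unfolding comp_monomial_def by simp
qed

lemma comp_monomial_inv_eq_iff:
  assumes "bij w"
  shows "comp_monomial (inv w) m = m' \<longleftrightarrow> m = comp_monomial w m'"
proof -
  have "comp_monomial (inv w) m = m' \<longleftrightarrow> Poly_Mapping.lookup m \<circ> inv w = Poly_Mapping.lookup m'"
    using assms by (simp add: poly_mapping_eq_iff lookup_comp_monomial bij_imp_bij_inv)
  also have "\<dots> \<longleftrightarrow> Poly_Mapping.lookup m = Poly_Mapping.lookup m' \<circ> w"
    using assms by (auto simp: fun_eq_iff) (metis bij_inv_eq_iff)+
  also have "\<dots> \<longleftrightarrow> m = comp_monomial w m'"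
    using assms by (simp add: poly_mapping_eq_iff lookup_comp_monomial)
  finally show ?thesis .
qed

lemma rename_eq_map_monomials:
  assumes "bij w"
  shows "rename w P = map_monomials (comp_monomial (inv w)) (\<lambda>_. 1) P"
proof (rule poly_mapping_eqI)
  fix m'
  have "inj (comp_monomial w)"
    using comp_monomial_inv_eq_iff[OF assms] by (metis injI)
  then have "finite (comp_monomial w -` Poly_Mapping.keys P)"
    by (simp add: finite_vimageI)
  moreover have "{m. Poly_Mapping.lookup P (comp_monomial w m) \<noteq> 0} =
      comp_monomial w -` Poly_Mapping.keys P"
    by (auto simp: in_keys_iff)
  ultimately have "Poly_Mapping.lookup (rename w P) m' = Poly_Mapping.lookup P (comp_monomial w m')"
    by (simp add: rename_def comp_monomial_def[symmetric])
  also have "\<dots> = (\<Sum>m\<in>Poly_Mapping.keys P.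
      if m = comp_monomial w m' then Poly_Mapping.lookup P m else 0)"
    by (simp add: in_keys_iff)
  also have "\<dots> = Poly_Mapping.lookup (map_monomials (comp_monomial (inv w)) (\<lambda>_. 1) P) m'"
    by (simp add: lookup_map_monomials comp_monomial_inv_eq_iff[OF assms])
  finally show "Poly_Mapping.lookup (rename w P) m' =
      Poly_Mapping.lookup (map_monomials (comp_monomial (inv w)) (\<lambda>_. 1) P) m'" .
qed

lemma rename_mult: "bij w \<Longrightarrow> rename w (P * Q) = rename w P * rename w Q"
  by (simp add: rename_eq_map_monomials map_monomials_mult poly_mapping_eq_iff lookup_add
      lookup_comp_monomial bij_imp_bij_inv fun_eq_iff)

lemma rename_diff: "bij w \<Longrightarrow> rename w (P - Q) = rename w P - rename w Q"
  by (simp add: rename_eq_map_monomials map_monomials_diff)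

lemma rename_Var:
  assumes "bij w"
  shows "rename w (Var j) = Var (w j)"
proof -
  have "comp_monomial (inv w) (Poly_Mapping.single j 1) = Poly_Mapping.single (w j) 1"
    using assms by (simp add: comp_monomial_inv_eq_iff)
      (rule poly_mapping_eqI;
        simp add: lookup_comp_monomial lookup_single when_def bij_inv_eq_iff bij_def inj_eq)
  then show ?thesis using assms by (simp add: rename_eq_map_monomials Var_def map_monomials_single)
qed

lemma rename_polys:
  assumes "w permutes {1..n}" and "P \<in> polys n"
  shows "rename w P \<in> polys n"
proof -
  have b: "bij (inv w)" using permutes_bij[OF assms(1)] by (rule bij_imp_bij_inv)
  have "Poly_Mapping.keys (comp_monomial (inv w) m) \<subseteq> {1..n}"
    if m: "m \<in> Poly_Mapping.keys P" for m
  proof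
    fix k assume k: "k \<in> Poly_Mapping.keys (comp_monomial (inv w) m)"
    show "k \<in> {1..n}"
    proof (rule ccontr)
      assume out: "k \<notin> {1..n}"
      then have "inv w k = k" using permutes_inv[OF assms(1)] by (simp add: permutes_not_in)
      then have "k \<in> Poly_Mapping.keys m" using k b by (simp add: in_keys_iff lookup_comp_monomial)
      then show False using out assms(2) m unfolding polys_def by blast
    qed
  qed
  then show ?thesis
    using keys_map_monomials[of "comp_monomial (inv w)" "\<lambda>_. 1" P]
    unfolding polys_def rename_eq_map_monomials[OF permutes_bij[OF assms(1)]] by blast
qed

section \<open>Functions on the symmetric group and the two actions\<close>

type_synonym hfun = "(nat \<Rightarrow> nat) \<Rightarrow> mpoly"

lemma Sn_comp: "v \<in> Sn n \<Longrightarrow> w \<in> Sn n \<Longrightarrow> v \<circ> w \<in> Sn n"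
  by (simp add: Sn_def permutes_compose)

lemma Sn_inv: "w \<in> Sn n \<Longrightarrow> inv w \<in> Sn n"
  by (simp add: Sn_def permutes_inv)

lemma Sn_bij: "w \<in> Sn n \<Longrightarrow> bij w"
  by (simp add: Sn_def permutes_bij)

lemma Sn_in_range: "w \<in> Sn n \<Longrightarrow> j \<in> {1..n} \<Longrightarrow> w j \<in> {1..n}"
  using permutes_in_image[of w "{1..n}" j] by (simp add: Sn_def)

lemma transpose_Sn: "a \<in> {1..n} \<Longrightarrow> b \<in> {1..n} \<Longrightarrow> transpose a b \<in> Sn n"
  by (simp add: Sn_def permutes_swap_id)

lemma HH_zero [simp]: "0 \<in> HH n"
  by (simp add: HH_def)

lemma HH_add: "f \<in> HH n \<Longrightarrow> g \<in> HH n \<Longrightarrow> f + g \<in> HH n"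
  by (simp add: HH_def polys_add)

lemma HH_diff: "f \<in> HH n \<Longrightarrow> g \<in> HH n \<Longrightarrow> f - g \<in> HH n"
  by (simp add: HH_def polys_diff)

lemma HH_uminus: "f \<in> HH n \<Longrightarrow> - f \<in> HH n"
  using HH_diff[of 0 n f] by simp

lemma HH_mult: "f \<in> HH n \<Longrightarrow> g \<in> HH n \<Longrightarrow> f * g \<in> HH n"
  by (simp add: HH_def polys_mult)

lemma const_HH: "p \<in> polys n \<Longrightarrow> const n p \<in> HH n"
  by (simp add: HH_def const_def)

lemma xx_HH: "j \<in> {1..n} \<Longrightarrow> xx n j \<in> HH n"
  using polys_Var[OF Sn_in_range] unfolding HH_def xx_def by (simp del: atLeastAtMost_iff)

lemma HH_outside: "f \<in> HH n \<Longrightarrow> v \<notin> Sn n \<Longrightarrow> f v = 0"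
  by (simp add: HH_def)

lemma HH_polys: "f \<in> HH n \<Longrightarrow> v \<in> Sn n \<Longrightarrow> f v \<in> polys n"
  by (simp add: HH_def)

lemma HH_eqI:
  assumes "\<And>v. v \<in> Sn n \<Longrightarrow> f v = g v" and "f \<in> HH n" and "g \<in> HH n"
  shows "f = g"
  using assms by (intro ext) (metis HH_outside)

lemma star_transpose:
  "star n f (transpose a b) = (\<lambda>v. if v \<in> Sn n then f (v \<circ> transpose a b) else 0)"
  unfolding star_def inv_transpose_eq ..

lemma star_HH:
  assumes "f \<in> HH n" and "w \<in> Sn n"
  shows "star n f w \<in> HH n"
  using assms by (simp add: HH_def star_def Sn_comp Sn_inv)

lemma star_add: "star n (f + g) w = star n f w + star n g w"
  by (rule ext) (simp add: star_def)

lemma star_diff: "star n (f - g) w = star n f w - star n g w"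
  by (rule ext) (simp add: star_def)

lemma star_mult: "star n (f * g) w = star n f w * star n g w"
  by (rule ext) (simp add: star_def)

lemma star_zero [simp]: "star n 0 w = 0"
  by (rule ext) (simp add: star_def)

lemma star_star:
  assumes "w \<in> Sn n" and "w' \<in> Sn n"
  shows "star n (star n f w) w' = star n f (w \<circ> w')"
  using assms by (intro ext) (simp add: star_def Sn_comp Sn_inv o_inv_distrib Sn_bij comp_assoc)

lemma star_id: "f \<in> HH n \<Longrightarrow> star n f id = f"
  by (rule ext) (simp add: star_def HH_outside)

lemma star_transpose_involutory:
  assumes "f \<in> HH n" and "a \<in> {1..n}" and "b \<in> {1..n}"
  shows "star n (star n f (transpose a b)) (transpose a b) = f"
  using assms by (simp add: star_star transpose_Sn star_id)

lemma star_xx: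
  assumes "w \<in> Sn n"
  shows "star n (xx n j) w = xx n (inv w j)"
  using assms by (intro ext) (simp add: star_def xx_def Sn_comp Sn_inv)

lemma star_const:
  assumes "w \<in> Sn n"
  shows "star n (const n p) w = const n p"
  using assms by (intro ext) (simp add: star_def const_def Sn_comp Sn_inv)

lemma dot_HH:
  assumes "w \<in> Sn n" and "f \<in> HH n"
  shows "dot n w f \<in> HH n"
proof -
  have "w permutes {1..n}" using assms(1) by (simp add: Sn_def)
  then show ?thesis using assms by (auto simp: HH_def dot_def Sn_comp Sn_inv intro!: rename_polys)
qed

lemma dot_mult: "w \<in> Sn n \<Longrightarrow> dot n w (f * g) = dot n w f * dot n w g"
  by (rule ext) (simp add: dot_def rename_mult Sn_bij)

lemma dot_diff: "w \<in> Sn n \<Longrightarrow> dot n w (f - g) = dot n w f - dot n w g"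
  by (rule ext) (simp add: dot_def rename_diff Sn_bij)

lemma dot_xx:
  assumes "w \<in> Sn n"
  shows "dot n w (xx n j) = xx n j"
proof (rule ext)
  fix v
  have "w (inv w (v j)) = v j" using Sn_bij[OF assms] by (simp add: bij_is_surj surj_f_inv_f)
  then show "dot n w (xx n j) v = xx n j v"
    using assms by (simp add: dot_def xx_def rename_Var Sn_bij Sn_comp Sn_inv)
qed

lemma star_dot:
  assumes "w \<in> Sn n" and "u \<in> Sn n"
  shows "star n (dot n w f) u = dot n w (star n f u)"
  using assms by (intro ext) (simp add: star_def dot_def Sn_comp Sn_inv comp_assoc)

lemma transpose_image_comp:
  assumes "bij w"
  shows "transpose (w a) (w b) \<circ> w = w \<circ> transpose a b"
  using transpose_comp_eq[OF assms, of "w a" "w b"] assms by (simp add: bij_is_inj)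

section \<open>The conditions defining H_C\<close>

definition satisfies_cond :: "nat \<Rightarrow> hfun \<Rightarrow> nat \<Rightarrow> nat \<Rightarrow> bool" where
  "satisfies_cond n f a b \<longleftrightarrow> (\<exists>g\<in>HH n. f - star n f (transpose a b) = (xx n a - xx n b) * g)"

lemma H_C_iff:
  "f \<in> H_C n C \<longleftrightarrow> f \<in> HH n \<and>
     (\<forall>a b. a \<in> {1..n} \<and> b \<in> {1..n} \<and> a < b \<and> transpose a b \<in> C \<longrightarrow> satisfies_cond n f a b)"
  unfolding H_C_def H_tau_def satisfies_cond_def by blast

lemma satisfies_cond_iff_dvd:
  assumes "f \<in> HH n" and "a \<in> {1..n}" and "b \<in> {1..n}"
  shows "satisfies_cond n f a b \<longleftrightarrow>
    (\<forall>v\<in>Sn n. (Var (v a) - Var (v b)) dvd (f v - f (v \<circ> transpose a b)))"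
proof
  assume "satisfies_cond n f a b"
  then obtain g where g: "f - star n f (transpose a b) = (xx n a - xx n b) * g"
    by (auto simp: satisfies_cond_def)
  have "f v - f (v \<circ> transpose a b) = (Var (v a) - Var (v b)) * g v" if "v \<in> Sn n" for v
    using fun_cong[OF g, of v] that by (simp add: star_transpose xx_def)
  then show "\<forall>v\<in>Sn n. (Var (v a) - Var (v b)) dvd (f v - f (v \<circ> transpose a b))"
    by (metis dvd_triv_left)
next
  assume dvd: "\<forall>v\<in>Sn n. (Var (v a) - Var (v b)) dvd (f v - f (v \<circ> transpose a b))"
  have "\<forall>v\<in>Sn n. \<exists>q. q \<in> polys n \<and> f v - f (v \<circ> transpose a b) = (Var (v a) - Var (v b)) * q"
  proof
    fix v assume v: "v \<in> Sn n"
    have "Var (v a) - Var (v b) \<in> polys n"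
      by (intro polys_diff polys_Var[OF Sn_in_range[OF v]] assms(2,3))
    moreover have "f v - f (v \<circ> transpose a b) \<in> polys n"
      using assms v by (simp add: polys_diff HH_polys Sn_comp transpose_Sn)
    ultimately show "\<exists>q. q \<in> polys n \<and> f v - f (v \<circ> transpose a b) = (Var (v a) - Var (v b)) * q"
      using polys_dvd_cofactor dvd v by blast
  qed
  from bchoice[OF this] obtain q where q: "\<forall>v\<in>Sn n. q v \<in> polys n \<and>
      f v - f (v \<circ> transpose a b) = (Var (v a) - Var (v b)) * q v" ..
  define g where "g v = (if v \<in> Sn n then q v else 0)" for v
  have "g \<in> HH n" using q by (simp add: HH_def g_def)
  moreover have "f - star n f (transpose a b) = (xx n a - xx n b) * g"
    using q assms(1) by (intro ext) (simp add: star_transpose xx_def g_def HH_outside)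
  ultimately show "satisfies_cond n f a b" by (auto simp: satisfies_cond_def)
qed

lemma satisfies_cond_star_invariant: "star n f (transpose a b) = f \<Longrightarrow> satisfies_cond n f a b"
  unfolding satisfies_cond_def by (intro bexI[of _ 0]) simp_all

lemma satisfies_cond_commute:
  assumes "satisfies_cond n f a b"
  shows "satisfies_cond n f b a"
proof -
  obtain g where g: "g \<in> HH n" "f - star n f (transpose a b) = (xx n a - xx n b) * g"
    using assms by (auto simp: satisfies_cond_def)
  then have "f - star n f (transpose b a) = (xx n b - xx n a) * (- g)"
    by (simp add: transpose_commute algebra_simps)
  then show ?thesis using g(1) unfolding satisfies_cond_def by (blast intro: HH_uminus)
qed

lemma satisfies_cond_add:
  assumes "f \<in> HH n" "g \<in> HH n" "a \<in> {1..n}" "b \<in> {1..n}"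
    and "satisfies_cond n f a b" "satisfies_cond n g a b"
  shows "satisfies_cond n (f + g) a b"
  using assms by (simp add: satisfies_cond_iff_dvd HH_add) (metis add_diff_add dvd_add)

lemma satisfies_cond_diff:
  assumes "f \<in> HH n" "g \<in> HH n" "a \<in> {1..n}" "b \<in> {1..n}"
    and "satisfies_cond n f a b" "satisfies_cond n g a b"
  shows "satisfies_cond n (f - g) a b"
proof -
  have "(Var (v a) - Var (v b)) dvd
      (f v - f (v \<circ> transpose a b)) - (g v - g (v \<circ> transpose a b))" if "v \<in> Sn n" for v
    using assms(5,6) that
    unfolding satisfies_cond_iff_dvd[OF assms(1,3,4)] satisfies_cond_iff_dvd[OF assms(2,3,4)]
    by (blast intro: dvd_diff)
  then show ?thesis using assms by (simp add: satisfies_cond_iff_dvd HH_diff algebra_simps)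
qed

lemma satisfies_cond_mult:
  assumes "f \<in> HH n" "g \<in> HH n" "a \<in> {1..n}" "b \<in> {1..n}"
    and "satisfies_cond n f a b" "satisfies_cond n g a b"
  shows "satisfies_cond n (f * g) a b"
proof -
  have "f v * g v - f v' * g v' = (f v - f v') * g v + f v' * (g v - g v')" for v v'
    by (simp add: algebra_simps)
  then show ?thesis
    using assms by (simp add: satisfies_cond_iff_dvd HH_mult)
qed

lemma Var_diff_dvd_Var_diff_transpose:
  "(Var (v a) - Var (v b)) dvd (Var (v j) - Var (v (transpose a b j)))"
proof -
  consider "j = a" | "j = b" | "j \<noteq> a" "j \<noteq> b" by blast
  then show ?thesis
  proof cases
    case 2
    then have "Var (v j) - Var (v (transpose a b j)) = - (Var (v a) - Var (v b))" by simp
    then show ?thesis by (simp only: dvd_minus_iff dvd_refl)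
  qed simp_all
qed

lemma satisfies_cond_xx:
  assumes "j \<in> {1..n}" "a \<in> {1..n}" "b \<in> {1..n}"
  shows "satisfies_cond n (xx n j) a b"
  using assms xx_HH[OF assms(1)]
  by (simp add: satisfies_cond_iff_dvd)
     (simp add: xx_def Sn_comp transpose_Sn Var_diff_dvd_Var_diff_transpose)

lemma satisfies_cond_dot:
  assumes "w \<in> Sn n" "a \<in> {1..n}" "b \<in> {1..n}" "satisfies_cond n f a b"
  shows "satisfies_cond n (dot n w f) a b"
proof -
  obtain h where h: "h \<in> HH n" "f - star n f (transpose a b) = (xx n a - xx n b) * h"
    using assms(4) by (auto simp: satisfies_cond_def)
  have "dot n w f - star n (dot n w f) (transpose a b) = dot n w (f - star n f (transpose a b))"
    using assms by (simp add: star_dot dot_diff transpose_Sn)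
  also have "\<dots> = (xx n a - xx n b) * dot n w h"
    using assms by (simp add: h(2) dot_mult dot_diff dot_xx)
  finally show ?thesis unfolding satisfies_cond_def using h(1) assms(1) by (blast intro: dot_HH)
qed

lemma H_C_HH: "f \<in> H_C n C \<Longrightarrow> f \<in> HH n"
  by (simp add: H_C_iff)

lemma H_C_satisfies_cond:
  assumes "f \<in> H_C n C" "transpose a b \<in> C" "a \<in> {1..n}" "b \<in> {1..n}" "a \<noteq> b"
  shows "satisfies_cond n f a b"
proof (cases "a < b")
  case True
  then show ?thesis using assms by (simp add: H_C_iff)
next
  case False
  then have "satisfies_cond n f b a"
    using assms by (simp add: H_C_iff transpose_commute)
  then show ?thesis by (rule satisfies_cond_commute)
qed

lemma H_C_zero: "0 \<in> H_C n C"
  by (simp add: H_C_iff satisfies_cond_star_invariant)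

lemma H_C_add: "f \<in> H_C n C \<Longrightarrow> g \<in> H_C n C \<Longrightarrow> f + g \<in> H_C n C"
  unfolding H_C_iff by (auto intro: satisfies_cond_add HH_add simp del: atLeastAtMost_iff)

lemma H_C_diff: "f \<in> H_C n C \<Longrightarrow> g \<in> H_C n C \<Longrightarrow> f - g \<in> H_C n C"
  unfolding H_C_iff by (auto intro: satisfies_cond_diff HH_diff simp del: atLeastAtMost_iff)

lemma H_C_mult: "f \<in> H_C n C \<Longrightarrow> g \<in> H_C n C \<Longrightarrow> f * g \<in> H_C n C"
  unfolding H_C_iff by (auto intro: satisfies_cond_mult HH_mult simp del: atLeastAtMost_iff)

lemma H_C_const: "p \<in> polys n \<Longrightarrow> const n p \<in> H_C n C"
  unfolding H_C_iff
  by (auto intro: satisfies_cond_star_invariant const_HH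
      simp: star_const transpose_Sn simp del: atLeastAtMost_iff)

lemma H_C_xx: "j \<in> {1..n} \<Longrightarrow> xx n j \<in> H_C n C"
  unfolding H_C_iff by (auto intro: satisfies_cond_xx xx_HH simp del: atLeastAtMost_iff)

lemma H_C_dot: "w \<in> Sn n \<Longrightarrow> f \<in> H_C n C \<Longrightarrow> dot n w f \<in> H_C n C"
  unfolding H_C_iff by (auto intro: satisfies_cond_dot dot_HH simp del: atLeastAtMost_iff)

lemma H_C_star:
  assumes w: "w \<in> Sn n" and conj: "\<And>c. c \<in> C \<Longrightarrow> w \<circ> c \<circ> inv w \<in> C" and f: "f \<in> H_C n C"
  shows "star n f w \<in> H_C n C"
  unfolding H_C_iff
proof (intro conjI allI impI)
  show "star n f w \<in> HH n" using H_C_HH[OF f] w by (rule star_HH)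
  fix a b assume ab: "a \<in> {1..n} \<and> b \<in> {1..n} \<and> a < b \<and> transpose a b \<in> C"
  let ?t = "transpose a b" and ?t' = "transpose (w a) (w b)"
  have comm: "?t' \<circ> w = w \<circ> ?t" using Sn_bij[OF w] by (rule transpose_image_comp)
  then have conj_t: "w \<circ> ?t \<circ> inv w = ?t'"
    using Sn_bij[OF w] by (metis bij_is_surj comp_id o_assoc surj_iff)
  have wab: "w a \<in> {1..n}" "w b \<in> {1..n}" using ab Sn_in_range[OF w] by blast+
  have "satisfies_cond n f (w a) (w b)"
  proof (rule H_C_satisfies_cond[OF f _ wab])
    show "?t' \<in> C" using conj[of ?t] ab conj_t by simp
    show "w a \<noteq> w b" using ab Sn_bij[OF w] by (auto simp: bij_def inj_eq)
  qed
  then obtain h where h: "h \<in> HH n" "f - star n f ?t' = (xx n (w a) - xx n (w b)) * h"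
    by (auto simp: satisfies_cond_def)
  have "star n f w - star n (star n f w) ?t = star n (f - star n f ?t') w"
    using w ab wab comm by (simp add: star_diff star_star transpose_Sn del: atLeastAtMost_iff)
  also have "\<dots> = (xx n a - xx n b) * star n h w"
    using w Sn_bij[OF w] by (simp add: h(2) star_mult star_diff star_xx bij_is_inj inv_f_f)
  finally show "satisfies_cond n (star n f w) a b"
    unfolding satisfies_cond_def using h(1) w by (blast intro: star_HH)
qed

section \<open>Division by x_a - x_b\<close>

lemma xx_diff_mult_cancel:
  assumes "a \<noteq> b" and "f \<in> HH n" and "g \<in> HH n"
    and "(xx n a - xx n b) * f = (xx n a - xx n b) * g"
  shows "f = g"
proof (rule HH_eqI[OF _ assms(2,3)])
  fix v assume v: "v \<in> Sn n"
  have "Var (v a) \<noteq> Var (v b)" using assms(1) Sn_bij[OF v] by (simp add: Var_eq_iff bij_def inj_eq)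
  moreover have "(Var (v a) - Var (v b)) * f v = (Var (v a) - Var (v b)) * g v"
    using fun_cong[OF assms(4), of v] v by (simp add: xx_def)
  ultimately show "f v = g v" by simp
qed

lemma star_xx_diff:
  assumes "a \<in> {1..n}" and "b \<in> {1..n}"
  shows "star n (xx n a - xx n b) (transpose a b) = - (xx n a - xx n b)"
  using assms by (simp add: star_diff star_xx transpose_Sn)

lemma star_invariant_cofactor:
  assumes ab: "a \<in> {1..n}" "b \<in> {1..n}" "a \<noteq> b" and f: "f \<in> HH n" and g: "g \<in> HH n"
    and fg: "f - star n f (transpose a b) = (xx n a - xx n b) * g"
  shows "star n g (transpose a b) = g"
proof (rule xx_diff_mult_cancel[OF ab(3) star_HH[OF g transpose_Sn[OF ab(1,2)]] g])
  have "- ((xx n a - xx n b) * star n g (transpose a b)) =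
      star n (f - star n f (transpose a b)) (transpose a b)"
    by (simp only: fg star_mult star_xx_diff[OF ab(1,2)] minus_mult_left)
  also have "\<dots> = - (f - star n f (transpose a b))"
    using ab f by (simp add: star_diff star_transpose_involutory)
  finally show "(xx n a - xx n b) * star n g (transpose a b) = (xx n a - xx n b) * g"
    by (simp add: fg)
qed

lemma satisfies_cond_mult_cancel:
  assumes g: "g \<in> HH n" and range: "a \<in> {1..n}" "b \<in> {1..n}" "i \<in> {1..n}" "j \<in> {1..n}"
    and "a \<noteq> b" and "i \<noteq> j" and "{i, j} \<noteq> {a, b}"
    and cond: "satisfies_cond n ((xx n i - xx n j) * g) a b"
  shows "satisfies_cond n g a b"
proof -
  let ?t = "transpose a b"
  have Dg: "(xx n i - xx n j) * g \<in> HH n" using g range by (intro HH_mult HH_diff xx_HH)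
  have "(Var (v a) - Var (v b)) dvd (g v - g (v \<circ> ?t))" if v: "v \<in> Sn n" for v
  proof -
    let ?P = "Var (v a) - Var (v b)"
    let ?A = "Var (v i) - Var (v j)" and ?A' = "Var (v (?t i)) - Var (v (?t j))"
    have "v \<circ> ?t \<in> Sn n" using v transpose_Sn[OF range(1,2)] by (rule Sn_comp)
    moreover have "?P dvd ((xx n i - xx n j) * g) v - ((xx n i - xx n j) * g) (v \<circ> ?t)"
      using cond v unfolding satisfies_cond_iff_dvd[OF Dg range(1,2)] by blast
    ultimately have "?P dvd ?A * g v - ?A' * g (v \<circ> ?t)"
      using v by (simp add: xx_def)
    moreover have "?A - ?A' = (Var (v i) - Var (v (?t i))) - (Var (v j) - Var (v (?t j)))"
      by (simp add: algebra_simps)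
    then have "?P dvd ?A - ?A'"
      by (simp only:) (intro dvd_diff Var_diff_dvd_Var_diff_transpose)
    then have "?P dvd (?A - ?A') * g (v \<circ> ?t)"
      by (rule dvd_mult2)
    ultimately have "?P dvd (?A * g v - ?A' * g (v \<circ> ?t)) - (?A - ?A') * g (v \<circ> ?t)"
      by (rule dvd_diff)
    then have dvd: "?P dvd ?A * (g v - g (v \<circ> ?t))"
      by (simp add: algebra_simps)
    have inj: "inj v" using Sn_bij[OF v] by (simp add: bij_def)
    then have "v a \<noteq> v b" "v i \<noteq> v j" using assms(6,7) by (simp_all add: inj_eq)
    moreover have "{v i, v j} \<noteq> {v a, v b}"
    proof
      assume "{v i, v j} = {v a, v b}"
      then have "v ` {i, j} = v ` {a, b}" by simp
      then have "{i, j} = {a, b}" by (simp only: inj_image_eq_iff[OF inj])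
      with assms(8) show False ..
    qed
    ultimately show ?thesis using dvd by (rule Var_diff_dvd_mult_cancel)
  qed
  then show ?thesis using g range by (simp add: satisfies_cond_iff_dvd)
qed

lemma cofactor_in_H_C:
  assumes ab: "a \<in> {1..n}" "b \<in> {1..n}" "a \<noteq> b"
    and conj: "\<And>c. c \<in> C \<Longrightarrow> transpose a b \<circ> c \<circ> transpose a b \<in> C"
    and f: "f \<in> H_C n C" and g: "g \<in> HH n"
    and fg: "f - star n f (transpose a b) = (xx n a - xx n b) * g"
  shows "g \<in> H_C n C"
  unfolding H_C_iff
proof (intro conjI allI impI)
  show "g \<in> HH n" by (rule g)
  fix c d assume cd: "c \<in> {1..n} \<and> d \<in> {1..n} \<and> c < d \<and> transpose c d \<in> C"
  show "satisfies_cond n g c d"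
  proof (cases "{a, b} = {c, d}")
    case True
    then have "transpose c d = transpose a b" by (auto simp: doubleton_eq_iff transpose_commute)
    then show ?thesis
      using star_invariant_cofactor[OF ab H_C_HH[OF f] g fg] by (simp add: satisfies_cond_star_invariant)
  next
    case False
    have "f - star n f (transpose a b) \<in> H_C n C"
      using f ab conj by (intro H_C_diff H_C_star transpose_Sn) simp_all
    then have "satisfies_cond n ((xx n a - xx n b) * g) c d"
      using cd by (simp add: fg H_C_iff)
    then show ?thesis
      using satisfies_cond_mult_cancel[OF g _ _ ab(1,2) _ ab(3) False] cd by simp
  qed
qed

section \<open>The decomposition\<close>

definition H_C_sym :: "nat \<Rightarrow> (nat \<Rightarrow> nat) set \<Rightarrow> nat \<Rightarrow> nat \<Rightarrow> hfun set" where
  "H_C_sym n C a b = {f \<in> H_C n C. star n f (transpose a b) = f}"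

definition H_C_alt :: "nat \<Rightarrow> (nat \<Rightarrow> nat) set \<Rightarrow> nat \<Rightarrow> nat \<Rightarrow> hfun set" where
  "H_C_alt n C a b = {(xx n a - xx n b) * f | f. f \<in> H_C_sym n C a b}"

lemma H_C_sym_iff: "f \<in> H_C_sym n C a b \<longleftrightarrow> f \<in> H_C n C \<and> star n f (transpose a b) = f"
  by (simp add: H_C_sym_def)

lemma H_C_alt_iff: "F \<in> H_C_alt n C a b \<longleftrightarrow> (\<exists>f\<in>H_C_sym n C a b. F = (xx n a - xx n b) * f)"
  by (auto simp: H_C_alt_def)

lemma is_submodule_H_C_sym:
  assumes "a \<in> {1..n}" and "b \<in> {1..n}"
  shows "is_submodule n (H_C_sym n C a b)"
  using assms unfolding is_submodule_def
  by (auto simp: H_C_sym_iff H_C_HH H_C_zero H_C_add H_C_mult H_C_const star_add star_mult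
      star_const transpose_Sn simp del: atLeastAtMost_iff)

lemma dot_stable_H_C_sym:
  assumes "a \<in> {1..n}" and "b \<in> {1..n}"
  shows "dot_stable n (H_C_sym n C a b)"
  using assms unfolding dot_stable_def
  by (auto simp: H_C_sym_iff H_C_dot star_dot transpose_Sn simp del: atLeastAtMost_iff)

lemma is_submodule_H_C_alt:
  assumes "a \<in> {1..n}" and "b \<in> {1..n}"
  shows "is_submodule n (H_C_alt n C a b)"
  unfolding is_submodule_def
proof (intro conjI ballI subsetI)
  let ?D = "xx n a - xx n b"
  have sym: "is_submodule n (H_C_sym n C a b)" using assms by (rule is_submodule_H_C_sym)
  fix F assume "F \<in> H_C_alt n C a b"
  then obtain f where f: "f \<in> H_C_sym n C a b" "F = ?D * f" by (auto simp: H_C_alt_iff)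
  show "F \<in> HH n" using sym f assms unfolding is_submodule_def by (blast intro: HH_mult HH_diff xx_HH)
  {
    fix G assume "G \<in> H_C_alt n C a b"
    then obtain g where g: "g \<in> H_C_sym n C a b" "G = ?D * g" by (auto simp: H_C_alt_iff)
    have "F + G = ?D * (f + g)" by (simp add: f(2) g(2) distrib_left)
    then show "F + G \<in> H_C_alt n C a b"
      using sym f(1) g(1) unfolding H_C_alt_iff is_submodule_def by blast
  }
  fix p assume "p \<in> polys n"
  have "const n p * F = ?D * (const n p * f)" by (simp add: f(2) mult.left_commute)
  then show "const n p * F \<in> H_C_alt n C a b"
    using sym f(1) \<open>p \<in> polys n\<close> unfolding H_C_alt_iff is_submodule_def by blast
next
  show "0 \<in> H_C_alt n C a b"
    using is_submodule_H_C_sym[OF assms]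
    by (auto simp: H_C_alt_iff is_submodule_def intro!: bexI[of _ 0])
qed

lemma dot_stable_H_C_alt:
  assumes "a \<in> {1..n}" and "b \<in> {1..n}"
  shows "dot_stable n (H_C_alt n C a b)"
  unfolding dot_stable_def
proof (intro ballI)
  fix w F assume w: "w \<in> Sn n" and "F \<in> H_C_alt n C a b"
  then obtain f where f: "f \<in> H_C_sym n C a b" "F = (xx n a - xx n b) * f"
    by (auto simp: H_C_alt_iff)
  have "dot n w F = (xx n a - xx n b) * dot n w f"
    using w by (simp add: f(2) dot_mult dot_diff dot_xx)
  moreover have "dot n w f \<in> H_C_sym n C a b"
    using dot_stable_H_C_sym[OF assms] w f(1) by (simp add: dot_stable_def)
  ultimately show "dot n w F \<in> H_C_alt n C a b" by (auto simp: H_C_alt_iff)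
qed

definition half :: "nat \<Rightarrow> hfun" where
  "half n = const n (Poly_Mapping.single 0 (1 / 2))"

lemma H_C_half: "half n \<in> H_C n C"
  unfolding half_def by (intro H_C_const polys_single_zero)

lemma star_half: "w \<in> Sn n \<Longrightarrow> star n (half n) w = half n"
  by (simp add: half_def star_const)

lemma half_decomposition:
  assumes "f \<in> HH n" and "f - f' = D * g"
  shows "f = half n * (f + f') + D * (half n * g)"
proof -
  have "D * (half n * g) = half n * (f - f')" by (simp add: assms(2) mult.left_commute)
  then have "half n * (f + f') + D * (half n * g) = (half n + half n) * f"
    by (simp add: algebra_simps)
  also have "\<dots> = f"
  proof (rule HH_eqI[OF _ _ assms(1)])
    show "(half n + half n) * f \<in> HH n"
      using assms(1) H_C_HH[OF H_C_half] by (intro HH_mult HH_add)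
    have "Poly_Mapping.single 0 (1 / 2) + Poly_Mapping.single 0 (1 / 2) = (1 :: mpoly)"
      by (simp flip: single_add)
    then show "((half n + half n) * f) v = f v" if "v \<in> Sn n" for v
      using that by (simp add: half_def const_def)
  qed
  finally show ?thesis by simp
qed

lemma H_C_eq_sym_plus_alt:
  assumes ab: "a \<in> {1..n}" "b \<in> {1..n}" "a \<noteq> b" and "transpose a b \<in> C"
    and conj: "\<And>c. c \<in> C \<Longrightarrow> transpose a b \<circ> c \<circ> transpose a b \<in> C"
  shows "H_C n C = {f + g | f g. f \<in> H_C_sym n C a b \<and> g \<in> H_C_alt n C a b}"
proof (intro set_eqI iffI)
  let ?t = "transpose a b" and ?D = "xx n a - xx n b"
  fix f assume f: "f \<in> H_C n C"
  obtain g where g: "g \<in> HH n" "f - star n f ?t = ?D * g"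
    using H_C_satisfies_cond[OF f assms(4) ab] by (auto simp: satisfies_cond_def)
  have ft: "star n f ?t \<in> H_C n C" using f ab conj by (intro H_C_star transpose_Sn) simp_all
  have gC: "g \<in> H_C n C" by (rule cofactor_in_H_C[OF ab conj f g])
  have gt: "star n g ?t = g" by (rule star_invariant_cofactor[OF ab H_C_HH[OF f] g])
  have tS: "?t \<in> Sn n" using ab(1,2) by (rule transpose_Sn)
  have "half n * (f + star n f ?t) \<in> H_C_sym n C a b"
    using f ft H_C_half tS H_C_HH[OF f]
    by (simp add: H_C_sym_iff H_C_mult H_C_add star_mult star_add star_half star_star star_id
        add.commute)
  moreover have "?D * (half n * g) \<in> H_C_alt n C a b"
    using gC H_C_half gt tS by (auto simp: H_C_alt_iff H_C_sym_iff H_C_mult star_mult star_half)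
  moreover have "f = half n * (f + star n f ?t) + ?D * (half n * g)"
    using H_C_HH[OF f] g(2) by (rule half_decomposition)
  ultimately show "f \<in> {f + g | f g. f \<in> H_C_sym n C a b \<and> g \<in> H_C_alt n C a b}" by blast
next
  fix F assume "F \<in> {f + g | f g. f \<in> H_C_sym n C a b \<and> g \<in> H_C_alt n C a b}"
  then obtain f g where "F = f + (xx n a - xx n b) * g" "f \<in> H_C n C" "g \<in> H_C n C"
    by (auto simp: H_C_alt_iff H_C_sym_iff)
  then show "F \<in> H_C n C" using ab by (simp add: H_C_add H_C_mult H_C_diff H_C_xx)
qed

lemma eq_neg_self_iff: "(x :: 'a :: {ring_char_0, ring_no_zero_divisors}) = - x \<longleftrightarrow> x = 0"
  by (metis eq_neg_iff_add_eq_0 mult_2 mult_eq_0_iff zero_neq_numeral)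

lemma H_C_sym_inter_alt:
  assumes "a \<in> {1..n}" and "b \<in> {1..n}"
  shows "H_C_sym n C a b \<inter> H_C_alt n C a b = {0}"
proof (intro equalityI subsetI)
  fix F assume F: "F \<in> H_C_sym n C a b \<inter> H_C_alt n C a b"
  then obtain f where f: "f \<in> H_C_sym n C a b" "F = (xx n a - xx n b) * f"
    by (auto simp: H_C_alt_iff)
  have ft: "star n f (transpose a b) = f" using f(1) by (simp add: H_C_sym_iff)
  have "F = star n F (transpose a b)" using F by (simp add: H_C_sym_iff)
  also have "\<dots> = - F" by (simp only: f(2) star_mult star_xx_diff[OF assms] ft minus_mult_left)
  finally have "F v = - F v" for v by (metis uminus_apply)
  then show "F \<in> {0}" by (simp add: fun_eq_iff eq_neg_self_iff)
next
  fix F :: hfun assume "F \<in> {0}"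
  then show "F \<in> H_C_sym n C a b \<inter> H_C_alt n C a b"
    by (auto simp: H_C_alt_iff H_C_sym_iff H_C_zero intro!: bexI[of _ 0])
qed

theorem theorem1:
  fixes n i :: nat and C :: "(nat \<Rightarrow> nat) set"
  assumes "n \<ge> 1" and "1 \<le> i" and "i \<le> n - 1"
    and "\<forall>\<tau> \<in> C. is_transposition n \<tau>"
    and "transpose i (i+1) \<in> C"
    and "(\<lambda>c. transpose i (i+1) \<circ> c \<circ> transpose i (i+1)) ` C = C"
  defines "Hs \<equiv> {f \<in> H_C n C. star n f (transpose i (i+1)) = f}"
  defines "Ha \<equiv> {(xx n i - xx n (i+1)) * f | f. f \<in> Hs}"
  shows "is_submodule n Hs \<and> dot_stable n Hs
       \<and> is_submodule n Ha \<and> dot_stable n Ha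
       \<and> H_C n C = {f + g | f g. f \<in> Hs \<and> g \<in> Ha}
       \<and> Hs \<inter> Ha = {0}"
proof -
  have range: "i \<in> {1..n}" "i + 1 \<in> {1..n}" "i \<noteq> i + 1" using assms(1-3) by auto
  have conj: "transpose i (i+1) \<circ> c \<circ> transpose i (i+1) \<in> C" if "c \<in> C" for c
    using assms(6) that by blast
  have "Hs = H_C_sym n C i (i+1)" and "Ha = H_C_alt n C i (i+1)"
    unfolding Hs_def Ha_def H_C_sym_def H_C_alt_def by simp_all
  then show ?thesis
    using is_submodule_H_C_sym[OF range(1,2)] dot_stable_H_C_sym[OF range(1,2)]
      is_submodule_H_C_alt[OF range(1,2)] dot_stable_H_C_alt[OF range(1,2)]
      H_C_eq_sym_plus_alt[OF range assms(5) conj] H_C_sym_inter_alt[OF range(1,2)]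
    by simp
qed

end
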